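(* Let $E$ be a closed formula in which all bound variables are pairwise distinct, let $S$ be the (finite) set of pieces of $E$, and let $d$ be the maximum depth of nested variables in $E$. Let $T$ be the finite set of LJB-sequents whose formulas all belong to $S$, whose bracket subscripts are all of the form $V(x)$ for some variable $x$ of $E$, and whose depth is at most $d$. Then only LJB-sequents of $T$ can occur in a derivation of $\vdash E$ in LJB.
   Context: Formulas: $A ::= P(t_1,\dots,t_n)\mid A\rightarrow A\mid\forall x\,A$, with first-order terms. A formula is a tree with nodes labelled by atomic formulas, $\rightarrow$, or $\forall x$; the pieces of $E$ are the formulas associated to the positions of this tree (the subtrees, without any substitution of variables). In $E$ each bound variable $x$ labels a unique position $\forall x$; $V(x)$ is the set of variables bound in the piece $\forall x\,A$ at that position. The maximum depth of nested variables is the maximal number of nodes labelled by a quantifier $\forall$ along a single root-to-leaf path of $E$. LJB: an LJB-context is a finite multiset of items; an item is a formula or $[\Gamma]_V$ ($V$ a finite set of variables bound by the bracket, $\Gamma$ an LJB-context); $FV([\Gamma]_V)=FV(\Gamma)\setminus V$. Depth: $depth(A)=0$ for a formula, $depth([\Gamma]_V)=1+depth(\Gamma)$, $depth(\{I_1,\dots,I_n\})=\max_i depth(I_i)$; the depth of an LJB-sequent is that of its context. Cleaning rules (anywhere in a context): $[I,\Gamma]_V\longrightarrow I,[\Gamma]_V$ if $FV(I)\cap V=\emptyset$; $[\ ]_V\longrightarrow\emptyset$; $I\,I\longrightarrow I$; $\Gamma{\downarrow}$ is the normal form for a fixed strategy. LJB rules apply only to LJB-sequents with normal context in which, in each formula,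 bound variables are distinct and distinct from free variables; formulas are not identified modulo $\alpha$. Rules: (L$\rightarrow$) from $\Gamma'\vdash A_1,\dots,\Gamma'\vdash A_n$ infer $\Gamma\vdash P$, where $\Gamma=\Gamma_1,[\Gamma_2,[\dots\Gamma_{i-1},[\Gamma_i, A_1\rightarrow\dots\rightarrow A_n\rightarrow P]_{V_{i-1}}\dots]_{V_2}]_{V_1}$ ($i\ge1$), $\Gamma'=([\dots[[\Gamma_1]_{V_1},\Gamma_2]_{V_2},\dots,\Gamma_{i-1}]_{V_{i-1}},\Gamma_i,A_1\rightarrow\dots\rightarrow A_n\rightarrow P){\downarrow}$, $P$ atomic with no free variable in $V_1\cup\dots\cup V_{i-1}$; (R$\forall$) from $[\Gamma]_V{\downarrow}\vdash A$ infer $\Gamma\vdash\forall x\,A$, $V$ the set of all variables bound in $\forall x\,A$; (R$\rightarrow$) from $(\Gamma,A){\downarrow}\vdash B$ infer $\Gamma\vdash A\rightarrow B$. *)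

theory Defs
  imports Main "HOL-Library.Multiset"
begin

datatype ('f,'v) trm = Var 'v | Fn 'f "('f,'v) trm list"

datatype ('p,'f,'v) fm =
    Atom 'p "('f,'v) trm list"
  | Imp "('p,'f,'v) fm" "('p,'f,'v) fm"
  | All 'v "('p,'f,'v) fm"

primrec tvars :: "('f,'v) trm \<Rightarrow> 'v set" where
  "tvars (Var x) = {x}"
| "tvars (Fn f ts) = \<Union> (set (map tvars ts))"

primrec fv :: "('p,'f,'v) fm \<Rightarrow> 'v set" where
  "fv (Atom p ts) = \<Union> (set (map tvars ts))"
| "fv (Imp A B) = fv A \<union> fv B"
| "fv (All x A) = fv A - {x}"

primrec bvl :: "('p,'f,'v) fm \<Rightarrow> 'v list" where
  "bvl (Atom p ts) = []"
| "bvl (Imp A B) = bvl A @ bvl B"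
| "bvl (All x A) = x # bvl A"

text \<open>Pieces: formulas at the positions of the formula tree (subtrees, no substitution).\<close>
primrec pieces :: "('p,'f,'v) fm \<Rightarrow> ('p,'f,'v) fm set" where
  "pieces (Atom p ts) = {Atom p ts}"
| "pieces (Imp A B) = insert (Imp A B) (pieces A \<union> pieces B)"
| "pieces (All x A) = insert (All x A) (pieces A)"

primrec qdepth :: "('p,'f,'v) fm \<Rightarrow> nat" where
  "qdepth (Atom p ts) = 0"
| "qdepth (Imp A B) = max (qdepth A) (qdepth B)"
| "qdepth (All x A) = Suc (qdepth A)"

text \<open>The sets V(x): variables bound in the piece \<forall>x A of E at the position labelled x.\<close>
definition Vsets :: "('p,'f,'v) fm \<Rightarrow> 'v set set" where
  "Vsets E = {set (bvl (All x A)) | x A. All x A \<in> pieces E}"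

primrec imps :: "('p,'f,'v) fm list \<Rightarrow> ('p,'f,'v) fm \<Rightarrow> ('p,'f,'v) fm" where
  "imps [] P = P"
| "imps (A # As) P = Imp A (imps As P)"

definition wellvar :: "('p,'f,'v) fm \<Rightarrow> bool" where
  "wellvar A \<longleftrightarrow> distinct (bvl A) \<and> set (bvl A) \<inter> fv A = {}"

datatype ('p,'f,'v) item =
    Fm "('p,'f,'v) fm"
  | Br "'v set" "('p,'f,'v) item multiset"

type_synonym ('p,'f,'v) ctx = "('p,'f,'v) item multiset"
type_synonym ('p,'f,'v) seq = "('p,'f,'v) ctx \<times> ('p,'f,'v) fm"

primrec FVi :: "('p,'f,'v) item \<Rightarrow> 'v set" where
  "FVi (Fm A) = fv A"
| "FVi (Br V G) = \<Union> (set_mset (image_mset FVi G)) - V"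

primrec idepth :: "('p,'f,'v) item \<Rightarrow> nat" where
  "idepth (Fm A) = 0"
| "idepth (Br V G) = Suc (Max (insert 0 (set_mset (image_mset idepth G))))"

definition cdepth :: "('p,'f,'v) ctx \<Rightarrow> nat" where
  "cdepth G = Max (insert 0 (set_mset (image_mset idepth G)))"

primrec ifms :: "('p,'f,'v) item \<Rightarrow> ('p,'f,'v) fm set" where
  "ifms (Fm A) = {A}"
| "ifms (Br V G) = \<Union> (set_mset (image_mset ifms G))"

primrec isubs :: "('p,'f,'v) item \<Rightarrow> 'v set set" where
  "isubs (Fm A) = {}"
| "isubs (Br V G) = insert V (\<Union> (set_mset (image_mset isubs G)))"

definition cfms :: "('p,'f,'v) ctx \<Rightarrow> ('p,'f,'v) fm set" where
  "cfms G = \<Union> (ifms ` set_mset G)"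

definition csubs :: "('p,'f,'v) ctx \<Rightarrow> 'v set set" where
  "csubs G = \<Union> (isubs ` set_mset G)"

inductive clean1 :: "('p,'f,'v) ctx \<Rightarrow> ('p,'f,'v) ctx \<Rightarrow> bool" where
  push:   "FVi I \<inter> V = {} \<Longrightarrow>
             clean1 (add_mset (Br V (add_mset I G)) D) (add_mset I (add_mset (Br V G) D))"
| empty:  "clean1 (add_mset (Br V {#}) D) D"
| dup:    "clean1 (add_mset I (add_mset I D)) (add_mset I D)"
| inside: "clean1 G G' \<Longrightarrow> clean1 (add_mset (Br V G) D) (add_mset (Br V G') D)"

definition clean_normal :: "('p,'f,'v) ctx \<Rightarrow> bool" where
  "clean_normal G \<longleftrightarrow> \<not> (\<exists>G'. clean1 G G')"

definition strategy :: "(('p,'f,'v) ctx \<Rightarrow> ('p,'f,'v) ctx) \<Rightarrow> bool" where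
  "strategy down \<longleftrightarrow> (\<forall>G. clean1\<^sup>*\<^sup>* G (down G) \<and> clean_normal (down G))"

text \<open>nest_in [(G1,V1),...,(G_{i-1},V_{i-1})] C = G1,[G2,[...[C]_{V_{i-1}}...]_{V2}]_{V1}\<close>
primrec nest_in :: "(('p,'f,'v) ctx \<times> 'v set) list \<Rightarrow> ('p,'f,'v) ctx \<Rightarrow> ('p,'f,'v) ctx" where
  "nest_in [] C = C"
| "nest_in (GV # L) C = add_mset (Br (snd GV) (nest_in L C)) (fst GV)"

text \<open>nest_out [(G1,V1),...,(G_{i-1},V_{i-1})] {#} = [...[[G1]_{V1},G2]_{V2},...,G_{i-1}]_{V_{i-1}}\<close>
primrec nest_out :: "(('p,'f,'v) ctx \<times> 'v set) list \<Rightarrow> ('p,'f,'v) ctx \<Rightarrow> ('p,'f,'v) ctx" where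
  "nest_out [] acc = acc"
| "nest_out (GV # L) acc = nest_out L {# Br (snd GV) (acc + fst GV) #}"

definition ljb_ok :: "('p,'f,'v) seq \<Rightarrow> bool" where
  "ljb_ok s \<longleftrightarrow> clean_normal (fst s) \<and> (\<forall>A \<in> insert (snd s) (cfms (fst s)). wellvar A)"

inductive ljb_rule :: "(('p,'f,'v) ctx \<Rightarrow> ('p,'f,'v) ctx) \<Rightarrow> ('p,'f,'v) seq list \<Rightarrow> ('p,'f,'v) seq \<Rightarrow> bool"
  for down where
  Limp: "\<lbrakk> P = Atom p ts; fv P \<inter> \<Union> (snd ` set L) = {};
           G = nest_in L (add_mset (Fm (imps As P)) Gi);
           G' = down (nest_out L {#} + add_mset (Fm (imps As P)) Gi);
           ljb_ok (G, P) \<rbrakk>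
         \<Longrightarrow> ljb_rule down (map (\<lambda>A. (G', A)) As) (G, P)"
| Rall: "\<lbrakk> V = set (bvl (All x A)); ljb_ok (G, All x A) \<rbrakk>
         \<Longrightarrow> ljb_rule down [(down {# Br V G #}, A)] (G, All x A)"
| Rimp: "ljb_ok (G, Imp A B) \<Longrightarrow> ljb_rule down [(down (add_mset (Fm A) G), B)] (G, Imp A B)"

datatype ('p,'f,'v) dtree = DNode "('p,'f,'v) seq" "('p,'f,'v) dtree list"

primrec droot :: "('p,'f,'v) dtree \<Rightarrow> ('p,'f,'v) seq" where
  "droot (DNode s ts) = s"

primrec dnodes :: "('p,'f,'v) dtree \<Rightarrow> ('p,'f,'v) seq set" where
  "dnodes (DNode s ts) = insert s (\<Union> (set (map dnodes ts)))"

primrec valid_deriv :: "(('p,'f,'v) ctx \<Rightarrow> ('p,'f,'v) ctx) \<Rightarrow> ('p,'f,'v) dtree \<Rightarrow> bool" where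
  "valid_deriv down (DNode s ts) \<longleftrightarrow> ljb_rule down (map droot ts) s \<and> list_all (valid_deriv down) ts"

definition Tset :: "('p,'f,'v) fm \<Rightarrow> ('p,'f,'v) seq set" where
  "Tset E = {(G, A). insert A (cfms G) \<subseteq> pieces E \<and> csubs G \<subseteq> Vsets E \<and> cdepth G \<le> qdepth E}"

end

theory Submission
  imports Defs
begin

(* Read upwards, every LJB rule only redistributes pieces of E and subscripts V(x) that already
   occur in its conclusion, and cleaning only deletes material, so formulas stay in S and
   subscripts among the V(x).
   For the depth, attach to every position of E the list of variables quantified above it. In a
   clean context each item of a bracket [Delta]_V(x) has a free variable in V(x); as E is closed
   and its bound variables are distinct, every item can be anchored at a position of E whose
   binder list covers its free variables, and an item of Delta is then anchored strictly below
   the quantifier forall x. So nesting of brackets follows nesting of quantifiers in E. *)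

(* (C, bs) \<in> occs E ps: C is the piece at a position of E, and bs is ps followed by the
   variables of the quantifiers above that position. *)
primrec occs :: "('p,'f,'v) fm \<Rightarrow> 'v list \<Rightarrow> (('p,'f,'v) fm \<times> 'v list) set" where
  "occs (Atom p ts) ps = {(Atom p ts, ps)}"
| "occs (Imp A B) ps = insert (Imp A B, ps) (occs A ps \<union> occs B ps)"
| "occs (All x A) ps = insert (All x A, ps) (occs A (ps @ [x]))"

lemma pieces_refl: "E \<in> pieces E"
  by (cases E) auto

lemma pieces_trans: "B \<in> pieces C \<Longrightarrow> C \<in> pieces E \<Longrightarrow> B \<in> pieces E"
  by (induction E) auto

lemma pieces_bvl_subset: "C \<in> pieces E \<Longrightarrow> set (bvl C) \<subseteq> set (bvl E)"
  by (induction E) auto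

lemma pieces_qdepth_le: "C \<in> pieces E \<Longrightarrow> qdepth C \<le> qdepth E"
  by (induction E) auto

lemma imps_pieces: "A \<in> set As \<Longrightarrow> A \<in> pieces (imps As P)"
  by (induction As) (auto simp: pieces_refl)

lemma occs_piece: "(C, bs) \<in> occs E ps \<Longrightarrow> C \<in> pieces E"
  by (induction E arbitrary: ps) auto

lemma piece_occs: "C \<in> pieces E \<Longrightarrow> \<exists>bs. (C, bs) \<in> occs E ps"
  by (induction E arbitrary: ps) auto

lemma occs_binders: "(C, bs) \<in> occs E ps \<Longrightarrow> \<exists>ds. bs = ps @ ds \<and> set ds \<subseteq> set (bvl E)"
proof (induction E arbitrary: ps)
  case (Imp A B)
  then show ?case by fastforce
next
  case (All x A)
  then show ?case by (fastforce intro: exI[of _ "x # _"])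
qed auto

lemma occs_fv: "(C, bs) \<in> occs E ps \<Longrightarrow> fv C \<subseteq> fv E \<union> set bs"
proof (induction E arbitrary: ps)
  case (All x A)
  then show ?case by (fastforce dest: occs_binders)
qed auto

(* Binder lists grow downwards and bound variables are distinct, so a position whose binder list
   meets V(x) lies strictly under the quantifier forall x. *)
lemma occs_scope:
  assumes "(C, bs) \<in> occs E ps" and "(All x A, as) \<in> occs E ps" and "distinct (ps @ bvl E)"
    and "z \<in> set bs" and "z \<in> set (bvl (All x A))"
  shows "(C, bs) \<in> occs A (as @ [x])"
  using assms
proof (induction E arbitrary: ps)
  case (Atom p ts)
  then show ?case by simp
next
  case (Imp E1 E2)
  have "z \<in> set (bvl (Imp E1 E2))"
    using Imp.prems(2,5) occs_piece pieces_bvl_subset by blast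
  then have z: "z \<notin> set ps"
    using Imp.prems(3) by auto
  have z_C: "z \<in> set (bvl F)" if "(C, bs) \<in> occs F ps" for F
    using occs_binders[OF that] z Imp.prems(4) by auto
  have z_All: "z \<in> set (bvl F)" if "(All x A, as) \<in> occs F ps" for F
    using that Imp.prems(5) occs_piece pieces_bvl_subset by blast
  from z_C z_All Imp.prems z show ?case
    using Imp.IH by (fastforce simp: disjoint_iff)
next
  case (All y E1)
  have "z \<in> set (bvl (All y E1))"
    using All.prems(2,5) occs_piece pieces_bvl_subset by blast
  then have "z \<notin> set ps"
    using All.prems(3) by auto
  then have C: "(C, bs) \<in> occs E1 (ps @ [y])"
    using All.prems(1,4) by auto
  show ?case
  proof (cases "(All x A, as) = (All y E1, ps)")
    case True
    with C show ?thesis by auto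
  next
    case False
    then have "(All x A, as) \<in> occs E1 (ps @ [y])"
      using All.prems(2) by auto
    with C All.prems(3-5) show ?thesis
      using All.IH by auto
  qed
qed

lemma cfms_simps [simp]:
  "cfms {#} = {}" "cfms (add_mset I G) = ifms I \<union> cfms G" "cfms (G + H) = cfms G \<union> cfms H"
  by (auto simp: cfms_def)

lemma csubs_simps [simp]:
  "csubs {#} = {}" "csubs (add_mset I G) = isubs I \<union> csubs G" "csubs (G + H) = csubs G \<union> csubs H"
  by (auto simp: csubs_def)

lemma ifms_Br [simp]: "ifms (Br V G) = cfms G"
  by (simp add: cfms_def)

lemma isubs_Br [simp]: "isubs (Br V G) = insert V (csubs G)"
  by (simp add: csubs_def)

declare ifms.simps(2) [simp del] isubs.simps(2) [simp del]

lemma clean1_shrinks: "clean1 G G' \<Longrightarrow> cfms G' \<subseteq> cfms G \<and> csubs G' \<subseteq> csubs G"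
  by (induction rule: clean1.induct) auto

lemma cleaning_shrinks: "clean1\<^sup>*\<^sup>* G G' \<Longrightarrow> cfms G' \<subseteq> cfms G \<and> csubs G' \<subseteq> csubs G"
  by (induction rule: rtranclp_induct) (use clean1_shrinks in blast)+

lemma strategy_shrinks: "strategy down \<Longrightarrow> cfms (down G) \<subseteq> cfms G \<and> csubs (down G) \<subseteq> csubs G"
  unfolding strategy_def using cleaning_shrinks by blast

lemma nest_in_material:
  "cfms (nest_in L C) = cfms C \<union> (\<Union>GV\<in>set L. cfms (fst GV))"
  "csubs (nest_in L C) = csubs C \<union> (\<Union>GV\<in>set L. insert (snd GV) (csubs (fst GV)))"
  by (induction L) auto

lemma nest_out_material:
  "cfms (nest_out L acc) = cfms acc \<union> (\<Union>GV\<in>set L. cfms (fst GV))"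
  "csubs (nest_out L acc) = csubs acc \<union> (\<Union>GV\<in>set L. insert (snd GV) (csubs (fst GV)))"
  by (induction L arbitrary: acc) auto

lemma nest_out_nest_in_material:
  "cfms (nest_out L {#} + C) = cfms (nest_in L C)"
  "csubs (nest_out L {#} + C) = csubs (nest_in L C)"
  by (auto simp: nest_in_material nest_out_material)

lemma Vsets_intro: "All x A \<in> pieces E \<Longrightarrow> set (bvl (All x A)) \<in> Vsets E"
  unfolding Vsets_def by blast

definition built_from :: "('p,'f,'v) fm \<Rightarrow> ('p,'f,'v) seq \<Rightarrow> bool" where
  "built_from E s \<longleftrightarrow> insert (snd s) (cfms (fst s)) \<subseteq> pieces E \<and> csubs (fst s) \<subseteq> Vsets E"

lemma ljb_rule_premise_built_from:
  assumes strat: "strategy down" and rule: "ljb_rule down ps s"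
    and built: "built_from E s" and q: "q \<in> set ps"
  shows "built_from E q"
  using rule
proof cases
  case (Limp P p ts L G As Gi G')
  let ?C = "add_mset (Fm (imps As P)) Gi"
  have built_G: "cfms G \<subseteq> pieces E" "csubs G \<subseteq> Vsets E"
    using built \<open>s = (G, P)\<close> by (simp_all add: built_from_def)
  have "cfms G' \<subseteq> cfms G" "csubs G' \<subseteq> csubs G"
    using strategy_shrinks[OF strat, of "nest_out L {#} + ?C"]
    unfolding \<open>G' = _\<close> \<open>G = _\<close> nest_out_nest_in_material by simp_all
  moreover have "imps As P \<in> cfms G"
    unfolding \<open>G = _\<close> by (simp add: nest_in_material)
  then have "set As \<subseteq> pieces E"
    using built_G imps_pieces pieces_trans by blast
  moreover obtain A where "q = (G', A)" "A \<in> set As"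
    using q \<open>ps = _\<close> by auto
  ultimately show ?thesis
    using built_G unfolding built_from_def by auto
next
  case (Rall V x A G)
  have built_G: "All x A \<in> pieces E" "cfms G \<subseteq> pieces E" "csubs G \<subseteq> Vsets E"
    using built \<open>s = _\<close> by (simp_all add: built_from_def)
  then have "A \<in> pieces E"
    using pieces_trans[of A "All x A"] by (simp add: pieces_refl)
  moreover have "V \<in> Vsets E"
    unfolding \<open>V = _\<close> using built_G(1) by (rule Vsets_intro)
  moreover have "cfms (down {#Br V G#}) \<subseteq> cfms G" "csubs (down {#Br V G#}) \<subseteq> insert V (csubs G)"
    using strategy_shrinks[OF strat, of "{#Br V G#}"] by simp_all
  moreover have "q = (down {#Br V G#}, A)"
    using q \<open>ps = _\<close> by simp
  ultimately show ?thesis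
    using built_G(2,3) unfolding built_from_def by auto
next
  case (Rimp G A B)
  have built_G: "Imp A B \<in> pieces E" "cfms G \<subseteq> pieces E" "csubs G \<subseteq> Vsets E"
    using built \<open>s = _\<close> by (simp_all add: built_from_def)
  then have "A \<in> pieces E" "B \<in> pieces E"
    using pieces_trans[of _ "Imp A B" E] by (simp_all add: pieces_refl)
  moreover have "cfms (down (add_mset (Fm A) G)) \<subseteq> insert A (cfms G)"
    "csubs (down (add_mset (Fm A) G)) \<subseteq> csubs G"
    using strategy_shrinks[OF strat, of "add_mset (Fm A) G"] by simp_all
  moreover have "q = (down (add_mset (Fm A) G), B)"
    using q \<open>ps = _\<close> by simp
  ultimately show ?thesis
    using built_G(2,3) unfolding built_from_def by auto
qed

lemma ljb_rule_conclusion_ok: "ljb_rule down ps s \<Longrightarrow> ljb_ok s"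
  by (induction rule: ljb_rule.induct) simp_all

lemma valid_deriv_nodes_ok: "valid_deriv down D \<Longrightarrow> s \<in> dnodes D \<Longrightarrow> ljb_ok s"
proof (induction D)
  case (DNode s' ts)
  then show ?case
    using ljb_rule_conclusion_ok by (fastforce simp: list_all_iff)
qed

lemma valid_deriv_nodes_built_from:
  assumes "strategy down"
  shows "valid_deriv down D \<Longrightarrow> built_from E (droot D) \<Longrightarrow> s \<in> dnodes D \<Longrightarrow> built_from E s"
proof (induction D)
  case (DNode s' ts)
  have "ljb_rule down (map droot ts) s'"
    using DNode.prems(1) by simp
  then have "built_from E (droot t)" if "t \<in> set ts" for t
    using ljb_rule_premise_built_from[OF assms _ DNode.prems(2)] that by simp
  with DNode show ?case
    by (auto simp: list_all_iff)
qed

lemma clean_normal_bracket: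
  assumes normal: "clean_normal G" and br: "Br V \<Delta> \<in># G"
  shows "clean_normal \<Delta>" and "J \<in># \<Delta> \<Longrightarrow> FVi J \<inter> V \<noteq> {}"
proof -
  obtain D where G: "G = add_mset (Br V \<Delta>) D"
    using br by (metis insert_DiffM)
  show "clean_normal \<Delta>"
    unfolding clean_normal_def
  proof
    assume "\<exists>\<Delta>'. clean1 \<Delta> \<Delta>'"
    then obtain \<Delta>' where "clean1 \<Delta> \<Delta>'" ..
    then have "clean1 G (add_mset (Br V \<Delta>') D)"
      unfolding G by (rule clean1.inside)
    with normal show False
      unfolding clean_normal_def by blast
  qed
  show "FVi J \<inter> V \<noteq> {}" if J: "J \<in># \<Delta>"
  proof
    assume "FVi J \<inter> V = {}"
    then have "clean1 (add_mset (Br V (add_mset J (\<Delta> - {#J#}))) D)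
        (add_mset J (add_mset (Br V (\<Delta> - {#J#})) D))"
      by (rule clean1.push)
    with normal J show False
      unfolding clean_normal_def G by (metis insert_DiffM)
  qed
qed

definition anchored :: "('p,'f,'v) fm \<Rightarrow> ('p,'f,'v) item \<Rightarrow> bool" where
  "anchored E I \<longleftrightarrow> (\<exists>C bs. (C, bs) \<in> occs E [] \<and> FVi I \<subseteq> set bs \<and> idepth I \<le> qdepth C)"

lemma anchored_Fm:
  assumes "fv E = {}" and "B \<in> pieces E"
  shows "anchored E (Fm B)"
proof -
  obtain bs where "(B, bs) \<in> occs E []"
    using piece_occs[OF assms(2)] by blast
  with assms(1) show ?thesis
    unfolding anchored_def using occs_fv by fastforce
qed

lemma anchored_Br:
  assumes dist: "distinct (bvl E)" and xA: "All x A \<in> pieces E"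
    and inner: "\<And>J. J \<in># \<Delta> \<Longrightarrow> anchored E J \<and> FVi J \<inter> set (bvl (All x A)) \<noteq> {}"
  shows "anchored E (Br (set (bvl (All x A))) \<Delta>)"
proof -
  let ?V = "set (bvl (All x A))"
  obtain as where as: "(All x A, as) \<in> occs E []"
    using piece_occs[OF xA] by blast
  have J_below: "FVi J - ?V \<subseteq> set as \<and> idepth J \<le> qdepth A" if J: "J \<in># \<Delta>" for J
  proof -
    obtain C bs where C: "(C, bs) \<in> occs E []" "FVi J \<subseteq> set bs" "idepth J \<le> qdepth C"
      using inner[OF J] unfolding anchored_def by blast
    obtain z where "z \<in> FVi J" "z \<in> ?V"
      using inner[OF J] by blast
    then have "(C, bs) \<in> occs A (as @ [x])"
      using occs_scope[OF C(1) as] dist C(2) by auto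
    moreover from this obtain ds where "bs = as @ [x] @ ds" "set ds \<subseteq> set (bvl A)"
      using occs_binders by fastforce
    ultimately show ?thesis
      using C(2,3) occs_piece pieces_qdepth_le by fastforce
  qed
  then have "FVi (Br ?V \<Delta>) \<subseteq> set as"
    by auto
  moreover have "idepth (Br ?V \<Delta>) \<le> qdepth (All x A)"
    using J_below by (simp add: Max_le_iff)
  ultimately show ?thesis
    unfolding anchored_def using as by blast
qed

lemma clean_normal_anchored:
  assumes closed: "fv E = {}" and dist: "distinct (bvl E)"
  shows "clean_normal G \<Longrightarrow> I \<in># G \<Longrightarrow> ifms I \<subseteq> pieces E \<Longrightarrow> isubs I \<subseteq> Vsets E \<Longrightarrow> anchored E I"
proof (induction I arbitrary: G)
  case (Fm B)
  then show ?case
    using anchored_Fm[OF closed] by simp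
next
  case (Br V \<Delta>)
  obtain x A where V: "V = set (bvl (All x A))" and xA: "All x A \<in> pieces E"
    using Br.prems(4) unfolding Vsets_def by auto
  have "anchored E J \<and> FVi J \<inter> V \<noteq> {}" if J: "J \<in># \<Delta>" for J
  proof
    show "anchored E J"
      using Br.IH[OF _ clean_normal_bracket(1)[OF Br.prems(1,2)] J] Br.prems(3,4) J
      by (auto simp: cfms_def csubs_def)
    show "FVi J \<inter> V \<noteq> {}"
      using clean_normal_bracket(2)[OF Br.prems(1,2) J] .
  qed
  then show ?case
    unfolding V using anchored_Br[OF dist xA] by blast
qed

lemma anchored_idepth_le: "anchored E I \<Longrightarrow> idepth I \<le> qdepth E"
  unfolding anchored_def using occs_piece pieces_qdepth_le le_trans by blast

lemma clean_normal_cdepth_le: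
  assumes "fv E = {}" and "distinct (bvl E)"
    and "clean_normal G" and "cfms G \<subseteq> pieces E" and "csubs G \<subseteq> Vsets E"
  shows "cdepth G \<le> qdepth E"
proof -
  have "idepth I \<le> qdepth E" if I: "I \<in># G" for I
  proof -
    have "ifms I \<subseteq> pieces E" "isubs I \<subseteq> Vsets E"
      using I assms(4,5) by (auto simp: cfms_def csubs_def)
    then show ?thesis
      by (intro anchored_idepth_le clean_normal_anchored[OF assms(1-3) I])
  qed
  then show ?thesis
    by (simp add: cdepth_def Max_le_iff)
qed

theorem proposition13:
  fixes E :: "('p,'f,'v) fm"
    and down :: "('p,'f,'v) ctx \<Rightarrow> ('p,'f,'v) ctx"
    and D :: "('p,'f,'v) dtree"
  assumes closed: "fv E = {}"
    and distinct_bound: "distinct (bvl E)"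
    and strat: "strategy down"
    and deriv: "valid_deriv down D"
    and root: "droot D = ({#}, E)"
  shows "dnodes D \<subseteq> Tset E"
proof
  fix s assume s: "s \<in> dnodes D"
  obtain G A where sGA: "s = (G, A)"
    by fastforce
  have "built_from E (droot D)"
    unfolding root built_from_def by (simp add: pieces_refl)
  then have built: "built_from E s"
    using valid_deriv_nodes_built_from[OF strat deriv _ s] by blast
  have "clean_normal G"
    using valid_deriv_nodes_ok[OF deriv s] sGA by (simp add: ljb_ok_def)
  then have "cdepth G \<le> qdepth E"
    using clean_normal_cdepth_le[OF closed distinct_bound] built sGA by (simp add: built_from_def)
  with built sGA show "s \<in> Tset E"
    by (simp add: Tset_def built_from_def)
qed

end
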